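(* Let $V$ be a real vector space and $X\subseteq V$ infinite. Then the join-semilattice of compact elements of $Co(V,X)$ contains a join-subsemilattice isomorphic to $Co^{<\omega}(\mathbb{N})$ or one isomorphic to $\mathcal{P}^{<\omega}(\mathbb{N})$.
   Context: $Co(V,X)$ is the lattice (under inclusion) of sets $C\cap X$ with $C$ convex in $V$; its compact elements are the sets $\mathrm{conv}(F)\cap X$ with $F\subseteq X$ finite, and they form a join-semilattice. $Co^{<\omega}(\mathbb{N})$ is the join-semilattice of finite intervals of the chain $\mathbb{N}$ ordered by inclusion, and $\mathcal{P}^{<\omega}(\mathbb{N})$ the join-semilattice of finite subsets of $\mathbb{N}$ ordered by inclusion. *)

theory Defs
  imports "HOL-Analysis.Analysis"
begin

text \<open>Compact elements of Co(V,X): sets conv(F) \<inter> X with F \<subseteq> X finite.\<close>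
definition Co_compact :: "'v::real_vector set \<Rightarrow> 'v set set" where
  "Co_compact X = {convex hull F \<inter> X | F. finite F \<and> F \<subseteq> X}"

text \<open>Join in the lattice Co(V,X): the least member containing both, i.e. conv(A \<union> B) \<inter> X.\<close>
definition Co_join :: "'v::real_vector set \<Rightarrow> 'v set \<Rightarrow> 'v set \<Rightarrow> 'v set" where
  "Co_join X A B = convex hull (A \<union> B) \<inter> X"

text \<open>Co^{<omega}(N): finite intervals (order-convex subsets) of the chain N, including the empty one.\<close>
definition fin_intervals_nat :: "nat set set" where
  "fin_intervals_nat = {{a..b} | a b. True} \<union> {{}}"

definition interval_join :: "nat set \<Rightarrow> nat set \<Rightarrow> nat set" where
  "interval_join I J = {n. \<exists>a\<in>I \<union> J. \<exists>b\<in>I \<union> J. a \<le> n \<and> n \<le> b}"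

definition fin_subsets_nat :: "nat set set" where
  "fin_subsets_nat = {A. finite A}"

text \<open>h embeds the join-semilattice (L, jL) onto a join-subsemilattice of (K, jK):
  injective, lands in K, and preserves joins (its image is then a join-subsemilattice
  isomorphic to L).\<close>
definition join_embedding ::
  "'a set \<Rightarrow> ('a \<Rightarrow> 'a \<Rightarrow> 'a) \<Rightarrow> 'b set \<Rightarrow> ('b \<Rightarrow> 'b \<Rightarrow> 'b) \<Rightarrow> ('a \<Rightarrow> 'b) \<Rightarrow> bool" where
  "join_embedding L jL K jK h \<longleftrightarrow>
     inj_on h L \<and> h ` L \<subseteq> K \<and> (\<forall>a\<in>L. \<forall>b\<in>L. h (jL a b) = jK (h a) (h b))"

end

theory Submission
  imports Defs "HOL-Library.Ramsey"
begin

text \<open>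
  Take a maximal linearly independent subset \<open>B\<close> of \<open>X\<close>. If \<open>B\<close> is infinite, distinct points
  of \<open>B\<close> are convexly independent (no point lies even in the span of the others), and
  \<open>A \<mapsto> conv(x`A) \<inter> X\<close> embeds the finite subsets of \<open>\<nat>\<close>.

  If \<open>B\<close> is finite, \<open>X\<close> is seen by finitely many coordinate functionals. By Ramsey's theorem for
  triples, a sequence of distinct points of \<open>X\<close> has a subsequence along which, for every pair of
  coordinates, the orientation of the projected triples has constant sign. If one of these signs
  is nonzero, the projected points run along a convex curve, so every point of the subsequence
  except the first is outside the convex hull of the others. Otherwise all points are collinear,
  and a subsequence moving monotonically along the line embeds the finite intervals of \<open>\<nat>\<close>,
  since then \<open>conv(x`{a..b})\<close> is the segment from \<open>x a\<close> to \<open>x b\<close>.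
\<close>

definition convex_independent :: "(nat \<Rightarrow> 'v::real_vector) \<Rightarrow> bool" where
  "convex_independent x \<longleftrightarrow> (\<forall>A n. finite A \<longrightarrow> n \<notin> A \<longrightarrow> x n \<notin> convex hull (x ` A))"

definition monotone_on_line :: "(nat \<Rightarrow> 'v::real_vector) \<Rightarrow> bool" where
  "monotone_on_line x \<longleftrightarrow>
     (\<exists>p u \<tau>. u \<noteq> 0 \<and> strict_mono (\<tau> :: nat \<Rightarrow> real) \<and> (\<forall>n. x n = p + \<tau> n *\<^sub>R u))"

lemma Co_join_convex_hull:
  fixes X :: "'v::real_vector set"
  assumes "A \<subseteq> X" "B \<subseteq> X"
  shows "Co_join X (convex hull A \<inter> X) (convex hull B \<inter> X) = convex hull (A \<union> B) \<inter> X"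
proof -
  have "convex hull (convex hull A \<inter> X \<union> convex hull B \<inter> X) \<subseteq> convex hull (A \<union> B)"
    by (rule hull_minimal) (auto intro: hull_mono[THEN subsetD])
  moreover have "convex hull (A \<union> B) \<subseteq> convex hull (convex hull A \<inter> X \<union> convex hull B \<inter> X)"
    using assms by (intro hull_mono) (auto intro: hull_inc)
  ultimately show ?thesis
    unfolding Co_join_def by blast
qed

lemma inj_on_convex_hull_image:
  fixes X :: "'v::real_vector set"
  assumes "range x \<subseteq> X" and recover: "\<And>I n. I \<in> L \<Longrightarrow> x n \<in> convex hull (x ` I) \<Longrightarrow> n \<in> I"
  shows "inj_on (\<lambda>I. convex hull (x ` I) \<inter> X) L"
proof (rule inj_onI)
  have sub: "I \<subseteq> J" if "I \<in> L" "J \<in> L" "convex hull (x ` I) \<inter> X = convex hull (x ` J) \<inter> X" for I J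
  proof
    fix n assume "n \<in> I"
    then have "x n \<in> convex hull (x ` I) \<inter> X"
      using assms(1) by (auto intro: hull_inc)
    then show "n \<in> J"
      using that recover by auto
  qed
  fix I J assume "I \<in> L" "J \<in> L" "convex hull (x ` I) \<inter> X = convex hull (x ` J) \<inter> X"
  then show "I = J"
    using sub by (metis subset_antisym)
qed

lemma convex_hull_image_in_Co_compact:
  fixes X :: "'v::real_vector set"
  assumes "finite I" "range x \<subseteq> X"
  shows "convex hull (x ` I) \<inter> X \<in> Co_compact X"
  using assms unfolding Co_compact_def by blast

lemma join_embedding_fin_subsets_nat:
  fixes X :: "'v::real_vector set"
  assumes "range x \<subseteq> X" "convex_independent x"
  shows "join_embedding fin_subsets_nat (\<union>) (Co_compact X) (Co_join X) (\<lambda>A. convex hull (x ` A) \<inter> X)"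
  unfolding join_embedding_def
proof (intro conjI ballI)
  show "inj_on (\<lambda>A. convex hull (x ` A) \<inter> X) fin_subsets_nat"
    using assms by (intro inj_on_convex_hull_image) (auto simp: convex_independent_def fin_subsets_nat_def)
  show "(\<lambda>A. convex hull (x ` A) \<inter> X) ` fin_subsets_nat \<subseteq> Co_compact X"
    using convex_hull_image_in_Co_compact[OF _ assms(1)] unfolding fin_subsets_nat_def by blast
  fix A B assume "A \<in> fin_subsets_nat" "B \<in> fin_subsets_nat"
  show "convex hull (x ` (A \<union> B)) \<inter> X = Co_join X (convex hull (x ` A) \<inter> X) (convex hull (x ` B) \<inter> X)"
    using assms(1) by (subst Co_join_convex_hull) (auto simp: image_Un)
qed

lemma line_point_in_segment_iff:
  fixes p u :: "'v::real_vector"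
  assumes "u \<noteq> 0" "\<alpha> \<le> \<beta>"
  shows "p + s *\<^sub>R u \<in> closed_segment (p + \<alpha> *\<^sub>R u) (p + \<beta> *\<^sub>R u) \<longleftrightarrow> \<alpha> \<le> s \<and> s \<le> \<beta>"
proof -
  have "closed_segment (\<alpha> *\<^sub>R u) (\<beta> *\<^sub>R u) = (\<lambda>t. t *\<^sub>R u) ` {\<alpha>..\<beta>}"
    using closed_segment_linear_image[of "\<lambda>t. t *\<^sub>R u" \<alpha> \<beta>] assms(2)
    by (simp add: linear_scaleR_left closed_segment_eq_real_ivl)
  moreover have "s *\<^sub>R u = t *\<^sub>R u \<longleftrightarrow> s = t" for t
    using assms(1) by (simp add: scaleR_cancel_right)
  ultimately show ?thesis
    by (auto simp: closed_segment_translation_eq)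
qed

lemma monotone_on_line_in_segment_iff:
  assumes "monotone_on_line x" "a \<le> b"
  shows "x n \<in> closed_segment (x a) (x b) \<longleftrightarrow> a \<le> n \<and> n \<le> b"
proof -
  obtain p u \<tau> where "u \<noteq> 0" "strict_mono (\<tau> :: nat \<Rightarrow> real)" "\<And>n. x n = p + \<tau> n *\<^sub>R u"
    using assms(1) unfolding monotone_on_line_def by blast
  then show ?thesis
    using assms(2) line_point_in_segment_iff[of u "\<tau> a" "\<tau> b" p "\<tau> n"]
    by (simp add: strict_mono_less_eq)
qed

lemma monotone_on_line_convex_hull_interval:
  assumes "monotone_on_line x" "a \<le> b"
  shows "convex hull (x ` {a..b}) = closed_segment (x a) (x b)"
proof
  show "convex hull (x ` {a..b}) \<subseteq> closed_segment (x a) (x b)"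
    using assms by (intro hull_minimal) (auto simp: monotone_on_line_in_segment_iff)
  show "closed_segment (x a) (x b) \<subseteq> convex hull (x ` {a..b})"
    using assms(2) by (simp add: segment_convex_hull hull_mono)
qed

lemma monotone_on_line_mem_convex_hull_fin_interval:
  assumes x: "monotone_on_line x" and I: "I \<in> fin_intervals_nat"
    and mem: "x n \<in> convex hull (x ` I)"
  shows "n \<in> I"
proof -
  from I consider "I = {}" | a b where "I = {a..b}" "a \<le> b"
    unfolding fin_intervals_nat_def by fastforce
  then show ?thesis
  proof cases
    case 1
    with mem show ?thesis by simp
  next
    case (2 a b)
    with mem have "x n \<in> closed_segment (x a) (x b)"
      using monotone_on_line_convex_hull_interval[OF x] by simp
    with 2 show ?thesis
      using monotone_on_line_in_segment_iff[OF x] by simp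
  qed
qed

lemma monotone_on_line_convex_hull_interval_join:
  assumes x: "monotone_on_line x"
  shows "convex hull (x ` interval_join I J) = convex hull (x ` (I \<union> J))"
proof
  have "x ` interval_join I J \<subseteq> convex hull (x ` (I \<union> J))"
  proof
    fix z assume "z \<in> x ` interval_join I J"
    then obtain n a b where z: "z = x n" "a \<in> I \<union> J" "b \<in> I \<union> J" "a \<le> n" "n \<le> b"
      unfolding interval_join_def by blast
    then have "z \<in> convex hull {x a, x b}"
      using monotone_on_line_in_segment_iff[OF x] by (simp flip: segment_convex_hull)
    also have "\<dots> \<subseteq> convex hull (x ` (I \<union> J))"
      using z by (intro hull_mono) auto
    finally show "z \<in> convex hull (x ` (I \<union> J))" .
  qed
  then show "convex hull (x ` interval_join I J) \<subseteq> convex hull (x ` (I \<union> J))"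
    by (rule convex_hull_subset)
  have "I \<union> J \<subseteq> interval_join I J"
    unfolding interval_join_def by blast
  then show "convex hull (x ` (I \<union> J)) \<subseteq> convex hull (x ` interval_join I J)"
    by (intro hull_mono image_mono)
qed

lemma join_embedding_fin_intervals_nat:
  fixes X :: "'v::real_vector set"
  assumes X: "range x \<subseteq> X" and x: "monotone_on_line x"
  shows "join_embedding fin_intervals_nat interval_join (Co_compact X) (Co_join X)
           (\<lambda>I. convex hull (x ` I) \<inter> X)"
  unfolding join_embedding_def
proof (intro conjI ballI)
  show "inj_on (\<lambda>I. convex hull (x ` I) \<inter> X) fin_intervals_nat"
    using X monotone_on_line_mem_convex_hull_fin_interval[OF x] by (rule inj_on_convex_hull_image)
  have "finite I" if "I \<in> fin_intervals_nat" for I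
    using that unfolding fin_intervals_nat_def by blast
  then show "(\<lambda>I. convex hull (x ` I) \<inter> X) ` fin_intervals_nat \<subseteq> Co_compact X"
    using convex_hull_image_in_Co_compact[OF _ X] by blast
  fix I J
  show "convex hull (x ` interval_join I J) \<inter> X
      = Co_join X (convex hull (x ` I) \<inter> X) (convex hull (x ` J) \<inter> X)"
    using X by (subst Co_join_convex_hull) (auto simp: image_Un monotone_on_line_convex_hull_interval_join[OF x])
qed

lemma convex_independent_if_independent:
  fixes x :: "nat \<Rightarrow> 'v::real_vector"
  assumes "inj x" "independent (range x)"
  shows "convex_independent x"
  unfolding convex_independent_def
proof (intro allI impI)
  fix A :: "nat set" and n :: nat assume "n \<notin> A"
  then have "x n \<notin> x ` A"
    using assms(1) by (simp add: inj_image_mem_iff)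
  moreover have "independent (insert (x n) (x ` A))"
    using assms(2) by (rule independent_mono) auto
  ultimately have "x n \<notin> span (x ` A)"
    by (simp add: independent_insert)
  then show "x n \<notin> convex hull (x ` A)"
    using convex_hull_subset_span by blast
qed

text \<open>Twice the signed area of the triangle \<open>a b c\<close> after projecting to the plane by \<open>(f, g)\<close>.\<close>
definition orientation :: "('v \<Rightarrow> real) \<Rightarrow> ('v \<Rightarrow> real) \<Rightarrow> 'v \<Rightarrow> 'v \<Rightarrow> 'v \<Rightarrow> real" where
  "orientation f g a b c = (f b - f a) * (g c - g a) - (g b - g a) * (f c - f a)"

lemma orientation_rotate: "orientation f g a b c = orientation f g b c a"
  unfolding orientation_def by algebra

lemma orientation_swap: "orientation f g a c b = - orientation f g a b c"
  unfolding orientation_def by algebra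

lemma convex_orientation_halfplane:
  assumes "linear f" "linear g"
  shows "convex {z. 0 \<le> \<sigma> * orientation f g a b z}"
proof (rule convexI)
  fix z w and c d :: real
  assume z: "z \<in> {z. 0 \<le> \<sigma> * orientation f g a b z}" and w: "w \<in> {z. 0 \<le> \<sigma> * orientation f g a b z}"
    and cd: "0 \<le> c" "0 \<le> d" "c + d = 1"
  have d: "d = 1 - c"
    using cd(3) by simp
  have lin: "h (c *\<^sub>R z + d *\<^sub>R w) = c * h z + d * h w" if "linear h" for h :: "_ \<Rightarrow> real"
    using that by (simp add: linear_add linear_cmul)
  have "orientation f g a b (c *\<^sub>R z + d *\<^sub>R w) = c * orientation f g a b z + d * orientation f g a b w"
    unfolding orientation_def lin[OF assms(1)] lin[OF assms(2)] by (simp add: d algebra_simps)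
  moreover have "0 \<le> c * (\<sigma> * orientation f g a b z) + d * (\<sigma> * orientation f g a b w)"
    by (rule add_nonneg_nonneg; rule mult_nonneg_nonneg) (use z w cd in auto)
  ultimately show "c *\<^sub>R z + d *\<^sub>R w \<in> {z. 0 \<le> \<sigma> * orientation f g a b z}"
    by (simp add: distrib_left mult.left_commute)
qed

lemma not_in_convex_hull_if_orientation_positive:
  fixes x :: "nat \<Rightarrow> 'v::real_vector"
  assumes "linear f" "linear g"
    and pos: "\<And>i j k. i < j \<Longrightarrow> j < k \<Longrightarrow> 0 < \<sigma> * orientation f g (x i) (x j) (x k)"
    and A: "finite A" "n \<notin> A" "l \<in> A" "l < n" "r \<in> A" "n < r"
  shows "x n \<notin> convex hull (x ` A)"
proof
  define a where "a = Max {m\<in>A. m < n}"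
  define b where "b = Min {m\<in>A. n < m}"
  have fin: "finite {m\<in>A. m < n}" "finite {m\<in>A. n < m}"
    using A(1) by auto
  have a: "a \<in> A" "a < n" and below: "\<And>m. m \<in> A \<Longrightarrow> m < n \<Longrightarrow> m \<le> a"
    using Max_in[OF fin(1)] Max_ge[OF fin(1)] A(3,4) unfolding a_def by blast+
  have b: "b \<in> A" "n < b" and above: "\<And>m. m \<in> A \<Longrightarrow> n < m \<Longrightarrow> b \<le> m"
    using Min_in[OF fin(2)] Min_le[OF fin(2)] A(5,6) unfolding b_def by blast+
  let ?H = "{z. 0 \<le> \<sigma> * orientation f g (x a) (x b) z}"
  have "x m \<in> ?H" if m: "m \<in> A" for m
  proof -
    have "m \<noteq> n" using m A(2) by blast
    then consider "m < a" | "m = a" | "m = b" | "b < m"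
      using below[OF m] above[OF m] by fastforce
    then show ?thesis
    proof cases
      case 1
      then show ?thesis
        using pos[of m a b] a b by (simp add: orientation_rotate[of f g "x m"])
    next
      case 4
      then show ?thesis
        using pos[of a b m] a b by simp
    qed (simp_all add: orientation_def)
  qed
  then have "convex hull (x ` A) \<subseteq> ?H"
    using convex_orientation_halfplane[OF assms(1,2)] by (intro hull_minimal) auto
  moreover assume "x n \<in> convex hull (x ` A)"
  ultimately have "0 \<le> \<sigma> * orientation f g (x a) (x b) (x n)"
    by blast
  moreover have "0 < \<sigma> * orientation f g (x a) (x n) (x b)"
    using pos a b by simp
  ultimately show False
    by (simp add: orientation_swap[of f g "x a" "x n"])
qed

text \<open>The half-plane argument needs indices of the set on both sides of \<open>n\<close>; after the shift,
  index \<open>0\<close> is always available on the left.\<close>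
lemma convex_independent_shift_if_orientation_positive:
  fixes x :: "nat \<Rightarrow> 'v::real_vector"
  assumes "linear f" "linear g"
    and pos: "\<And>i j k. i < j \<Longrightarrow> j < k \<Longrightarrow> 0 < \<sigma> * orientation f g (x i) (x j) (x k)"
  shows "convex_independent (\<lambda>n. x (Suc n))"
  unfolding convex_independent_def
proof (intro allI impI)
  fix A :: "nat set" and n :: nat assume A: "finite A" "n \<notin> A"
  define r where "r = Suc (Max (insert (Suc n) (Suc ` A)))"
  have r: "m < r" if "m \<in> insert (Suc n) (Suc ` A)" for m
    using A(1) that unfolding r_def by (simp add: le_imp_less_Suc)
  have "x (Suc n) \<notin> convex hull (x ` insert 0 (insert r (Suc ` A)))"
    by (rule not_in_convex_hull_if_orientation_positive[OF assms, where l = 0 and r = r]) (use A r in auto)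
  moreover have "(\<lambda>n. x (Suc n)) ` A \<subseteq> x ` insert 0 (insert r (Suc ` A))"
    by auto
  ultimately show "x (Suc n) \<notin> convex hull ((\<lambda>n. x (Suc n)) ` A)"
    using hull_mono by blast
qed

lemma Ramsey_nsets_simultaneous:
  fixes c :: "'q \<Rightarrow> 'a set \<Rightarrow> nat"
  assumes "finite Q" "infinite Z" "\<And>q. q \<in> Q \<Longrightarrow> c q ` [Z]\<^bsup>r\<^esup> \<subseteq> {..<s}"
  shows "\<exists>Y\<subseteq>Z. infinite Y \<and> (\<forall>q\<in>Q. \<exists>t. c q ` [Y]\<^bsup>r\<^esup> \<subseteq> {t})"
  using assms
proof (induction Q arbitrary: Z rule: finite_induct)
  case empty
  then show ?case by blast
next
  case (insert q Q)
  have "\<exists>Y1\<subseteq>Z. infinite Y1 \<and> (\<forall>q\<in>Q. \<exists>t. c q ` [Y1]\<^bsup>r\<^esup> \<subseteq> {t})"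
    by (rule insert.IH[OF insert.prems(1)]) (simp add: insert.prems(2))
  then obtain Y1 where Y1: "Y1 \<subseteq> Z" "infinite Y1" "\<forall>q\<in>Q. \<exists>t. c q ` [Y1]\<^bsup>r\<^esup> \<subseteq> {t}"
    by blast
  have "c q ` [Y1]\<^bsup>r\<^esup> \<subseteq> {..<s}"
    using image_mono[OF nsets_mono[OF Y1(1)], of "c q"] insert.prems(2)[of q] by (meson insertI1 order_trans)
  then obtain Y2 t where Y2: "Y2 \<subseteq> Y1" "infinite Y2" "t < s" "c q ` [Y2]\<^bsup>r\<^esup> \<subseteq> {t}"
    by (rule Ramsey_nsets[OF Y1(2)])
  have "\<forall>q'\<in>insert q Q. \<exists>t. c q' ` [Y2]\<^bsup>r\<^esup> \<subseteq> {t}"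
  proof
    fix q' assume q': "q' \<in> insert q Q"
    show "\<exists>t. c q' ` [Y2]\<^bsup>r\<^esup> \<subseteq> {t}"
    proof (cases "q' = q")
      case True
      with Y2(4) show ?thesis by (intro exI[of _ t]) simp
    next
      case False
      with q' have "q' \<in> Q" by simp
      then obtain t' where "c q' ` [Y1]\<^bsup>r\<^esup> \<subseteq> {t'}"
        using bspec[OF Y1(3)] by blast
      then have "c q' ` [Y2]\<^bsup>r\<^esup> \<subseteq> {t'}"
        by (rule order_trans[OF image_mono[OF nsets_mono[OF Y2(1)]]])
      then show ?thesis ..
    qed
  qed
  moreover have "Y2 \<subseteq> Z"
    using Y1(1) Y2(1) by (rule order_trans[rotated])
  ultimately show ?case
    by (intro exI[of _ Y2] conjI) (use Y2(2) in auto)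
qed

lemma Ramsey_ordered_triples:
  fixes c :: "'q \<Rightarrow> nat \<Rightarrow> nat \<Rightarrow> nat \<Rightarrow> nat"
  assumes "finite Q" "\<And>q i j k. c q i j k < s"
  obtains e :: "nat \<Rightarrow> nat" where "strict_mono e"
    "\<And>q. q \<in> Q \<Longrightarrow> \<exists>t. \<forall>i j k. i < j \<longrightarrow> j < k \<longrightarrow> c q (e i) (e j) (e k) = t"
proof -
  define C where "C q S = (let l = sorted_list_of_set S in c q (l ! 0) (l ! 1) (l ! 2))" for q S
  have "C q ` [UNIV]\<^bsup>3\<^esup> \<subseteq> {..<s}" for q
    using assms(2) unfolding C_def Let_def by blast
  then obtain Y where Y: "infinite Y" "\<forall>q\<in>Q. \<exists>t. C q ` [Y]\<^bsup>3\<^esup> \<subseteq> {t}"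
    using Ramsey_nsets_simultaneous[OF assms(1) infinite_UNIV_nat, of C 3 s] by blast
  define e where "e = enumerate Y"
  have e: "strict_mono e"
    unfolding e_def using Y(1) by (rule strict_mono_enumerate)
  have eY: "e n \<in> Y" for n
    unfolding e_def using Y(1) by (rule enumerate_in_set)
  have "\<exists>t. \<forall>i j k. i < j \<longrightarrow> j < k \<longrightarrow> c q (e i) (e j) (e k) = t" if q: "q \<in> Q" for q
  proof -
    obtain t where t: "C q ` [Y]\<^bsup>3\<^esup> \<subseteq> {t}"
      using Y(2) q by blast
    have "c q (e i) (e j) (e k) = t" if "i < j" "j < k" for i j k
    proof -
      have lt: "e i < e j" "e j < e k"
        using e that by (simp_all add: strict_mono_less)
      have "{e i, e j, e k} \<in> [Y]\<^bsup>3\<^esup>"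
        using eY lt unfolding nsets_def by auto
      moreover have "sorted_list_of_set {e i, e j, e k} = [e i, e j, e k]"
        using lt by (subst sorted_list_of_set_unique[symmetric]) auto
      ultimately show ?thesis
        using t unfolding C_def by auto
    qed
    then show ?thesis by blast
  qed
  with e show ?thesis by (rule that)
qed

lemma collinear_if_orientations_vanish:
  fixes \<Phi> :: "('v::real_vector \<Rightarrow> real) set"
  assumes lin: "\<And>\<phi>. \<phi> \<in> \<Phi> \<Longrightarrow> linear \<phi>"
    and detect: "\<And>v. v \<in> S \<Longrightarrow> (\<And>\<phi>. \<phi> \<in> \<Phi> \<Longrightarrow> \<phi> v = 0) \<Longrightarrow> v = 0"
    and S: "subspace S" "a \<in> S" "b \<in> S" "c \<in> S" and "b \<noteq> a"
    and flat: "\<And>\<phi> \<psi>. \<phi> \<in> \<Phi> \<Longrightarrow> \<psi> \<in> \<Phi> \<Longrightarrow> orientation \<phi> \<psi> a b c = 0"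
  shows "\<exists>t. c - a = t *\<^sub>R (b - a)"
proof -
  have "b - a \<in> S" "b - a \<noteq> 0"
    using S \<open>b \<noteq> a\<close> by (simp_all add: subspace_diff)
  then obtain \<phi>0 where \<phi>0: "\<phi>0 \<in> \<Phi>" "\<phi>0 b - \<phi>0 a \<noteq> 0"
    using detect lin by (metis linear_diff)
  define t where "t = (\<phi>0 c - \<phi>0 a) / (\<phi>0 b - \<phi>0 a)"
  have "\<phi> (c - a - t *\<^sub>R (b - a)) = 0" if \<phi>: "\<phi> \<in> \<Phi>" for \<phi>
  proof -
    have "(\<phi>0 b - \<phi>0 a) * (\<phi> c - \<phi> a) = (\<phi> b - \<phi> a) * (\<phi>0 c - \<phi>0 a)"
      using flat[OF \<phi>0(1) \<phi>] by (simp add: orientation_def)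
    then have "\<phi> c - \<phi> a = t * (\<phi> b - \<phi> a)"
      using \<phi>0(2) by (simp add: t_def field_simps)
    then show ?thesis
      using lin[OF \<phi>] by (simp add: linear_diff linear_cmul)
  qed
  moreover have "c - a - t *\<^sub>R (b - a) \<in> S"
    using S by (simp add: subspace_diff subspace_scale)
  ultimately have "c - a - t *\<^sub>R (b - a) = 0"
    by (rule detect[rotated])
  then show ?thesis by auto
qed

lemma inj_real_seq_strict_mono_subseq:
  fixes \<tau> :: "nat \<Rightarrow> real"
  assumes "inj \<tau>"
  obtains g :: "nat \<Rightarrow> nat" and \<sigma> :: real
  where "strict_mono g" "\<sigma> * \<sigma> = 1" "strict_mono (\<lambda>n. \<sigma> * \<tau> (g n))"
proof -
  obtain g where g: "strict_mono g" "monoseq (\<lambda>n. \<tau> (g n))"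
    using seq_monosub by blast
  have ne: "\<tau> (g m) \<noteq> \<tau> (g n)" if "m < n" for m n
    using assms g(1) that by (metis injD strict_mono_eq less_irrefl)
  from g(2) consider "\<And>m n. m \<le> n \<Longrightarrow> \<tau> (g m) \<le> \<tau> (g n)" | "\<And>m n. m \<le> n \<Longrightarrow> \<tau> (g n) \<le> \<tau> (g m)"
    unfolding monoseq_def by blast
  then show ?thesis
  proof cases
    case 1
    then have mono: "strict_mono (\<lambda>n. 1 * \<tau> (g n))"
      using ne by (intro strict_monoI) (simp add: less_le)
    show ?thesis
      by (rule that[OF g(1) _ mono]) simp
  next
    case 2
    then have mono: "strict_mono (\<lambda>n. -1 * \<tau> (g n))"
      using ne by (intro strict_monoI) (simp add: less_le)
    show ?thesis
      by (rule that[OF g(1) _ mono]) simp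
  qed
qed

lemma monotone_on_line_subseq_if_collinear:
  fixes x :: "nat \<Rightarrow> 'v::real_vector"
  assumes inj: "inj x" and col: "\<And>k. \<exists>t. x k - x 0 = t *\<^sub>R (x 1 - x 0)"
  obtains g :: "nat \<Rightarrow> nat" where "monotone_on_line (x \<circ> g)"
proof -
  define u where "u = x 1 - x 0"
  have u: "u \<noteq> 0"
    using injD[OF inj, of 1 0] by (auto simp: u_def)
  have "\<forall>k. \<exists>t. x k = x 0 + t *\<^sub>R u"
    using col unfolding u_def by (metis add.commute diff_add_cancel)
  then obtain \<tau> where \<tau>: "\<And>k. x k = x 0 + \<tau> k *\<^sub>R u"
    by metis
  have "inj \<tau>"
    using inj by (metis \<tau> injI injD)
  then obtain g :: "nat \<Rightarrow> nat" and \<sigma> where "strict_mono g" and \<sigma>: "\<sigma> * \<sigma> = 1" "strict_mono (\<lambda>n. \<sigma> * \<tau> (g n))"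
    by (rule inj_real_seq_strict_mono_subseq)
  have "x (g n) = x 0 + (\<sigma> * \<tau> (g n)) *\<^sub>R (\<sigma> *\<^sub>R u)" for n
    using \<tau>[of "g n"] \<sigma>(1) by (simp add: mult.commute mult.left_commute)
  moreover have "\<sigma> *\<^sub>R u \<noteq> 0"
    using u \<sigma>(1) by auto
  ultimately have "monotone_on_line (x \<circ> g)"
    unfolding monotone_on_line_def o_def using \<sigma>(2) by blast
  then show ?thesis by (rule that)
qed

lemma monotone_on_line_subseq_if_orientations_vanish:
  fixes x :: "nat \<Rightarrow> 'v::real_vector" and \<Phi> :: "('v \<Rightarrow> real) set"
  assumes lin: "\<And>\<phi>. \<phi> \<in> \<Phi> \<Longrightarrow> linear \<phi>"
    and detect: "\<And>v. v \<in> S \<Longrightarrow> (\<And>\<phi>. \<phi> \<in> \<Phi> \<Longrightarrow> \<phi> v = 0) \<Longrightarrow> v = 0"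
    and S: "subspace S" "range x \<subseteq> S" and inj: "inj x"
    and flat: "\<And>\<phi> \<psi> i j k. \<phi> \<in> \<Phi> \<Longrightarrow> \<psi> \<in> \<Phi> \<Longrightarrow> i < j \<Longrightarrow> j < k \<Longrightarrow>
      orientation \<phi> \<psi> (x i) (x j) (x k) = 0"
  obtains g :: "nat \<Rightarrow> nat" where "monotone_on_line (x \<circ> g)"
proof -
  have "x 1 \<noteq> x 0"
    using inj by (metis injD zero_neq_one)
  have "\<exists>t. x k - x 0 = t *\<^sub>R (x 1 - x 0)" for k
  proof (cases "k \<le> 1")
    case True
    then have "k = 0 \<or> k = 1" by auto
    then show ?thesis by (metis scaleR_one scaleR_zero_left diff_self)
  next
    case False
    with \<open>x 1 \<noteq> x 0\<close> S show ?thesis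
      by (intro collinear_if_orientations_vanish[OF lin detect S(1)] flat) auto
  qed
  with inj show ?thesis
    using monotone_on_line_subseq_if_collinear that by blast
qed

lemma finite_functionals_detecting_span:
  fixes B :: "'v::real_vector set"
  assumes "finite B" "independent B"
  obtains \<Phi> :: "('v \<Rightarrow> real) set" where "finite \<Phi>" "\<And>\<phi>. \<phi> \<in> \<Phi> \<Longrightarrow> linear \<phi>"
    "\<And>v. v \<in> span B \<Longrightarrow> (\<And>\<phi>. \<phi> \<in> \<Phi> \<Longrightarrow> \<phi> v = 0) \<Longrightarrow> v = 0"
proof
  let ?C = "extend_basis B"
  have C: "independent ?C" "span ?C = UNIV"
    using assms(2) by (simp_all add: independent_extend_basis)
  show "finite ((\<lambda>b v. representation ?C v b) ` B)"
    using assms(1) by simp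
  show "linear \<phi>" if "\<phi> \<in> (\<lambda>b v. representation ?C v b) ` B" for \<phi>
    using that C by (auto intro!: linearI simp: representation_add representation_scale)
  fix v assume v: "v \<in> span B" and zero: "\<And>\<phi>. \<phi> \<in> (\<lambda>b v. representation ?C v b) ` B \<Longrightarrow> \<phi> v = 0"
  have "representation B v b = 0" if "b \<in> B" for b
    using zero[of "\<lambda>v. representation ?C v b"] that
      representation_extend[OF C(1) v extend_basis_superset[OF assms(2)]] by simp
  then show "v = 0"
    using sum_representation_eq[OF assms(2) v assms(1) order_refl] by simp
qed

lemma Ramsey_sign_homogeneous_subseq:
  fixes h :: "'q \<Rightarrow> nat \<Rightarrow> nat \<Rightarrow> nat \<Rightarrow> real"
  assumes "finite Q"
  obtains e :: "nat \<Rightarrow> nat" where "strict_mono e"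
    "\<And>q i j k i' j' k'. q \<in> Q \<Longrightarrow> i < j \<Longrightarrow> j < k \<Longrightarrow> i' < j' \<Longrightarrow> j' < k' \<Longrightarrow>
       h q (e i) (e j) (e k) \<noteq> 0 \<Longrightarrow> 0 < sgn (h q (e i) (e j) (e k)) * h q (e i') (e j') (e k')"
proof -
  define c where "c q i j k = (if 0 < h q i j k then 0 else if h q i j k < 0 then 1 else 2 :: nat)"
    for q i j k
  have c_less_3: "c q i j k < 3" for q i j k
    by (simp add: c_def)
  obtain e :: "nat \<Rightarrow> nat" where e: "strict_mono e"
    and homogeneous: "\<And>q. q \<in> Q \<Longrightarrow> \<exists>t. \<forall>i j k. i < j \<longrightarrow> j < k \<longrightarrow> c q (e i) (e j) (e k) = t"
    using Ramsey_ordered_triples[OF assms, of c 3] c_less_3 by blast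
  show ?thesis
  proof (rule that[OF e])
    fix q and i j k i' j' k' :: nat
    assume "q \<in> Q" "i < j" "j < k" "i' < j'" "j' < k'" and nonzero: "h q (e i) (e j) (e k) \<noteq> 0"
    then have "c q (e i) (e j) (e k) = c q (e i') (e j') (e k')"
      using homogeneous by metis
    with nonzero show "0 < sgn (h q (e i) (e j) (e k)) * h q (e i') (e j') (e k')"
      by (auto simp: c_def split: if_splits)
  qed
qed

lemma convex_independent_or_monotone_on_line_subseq:
  fixes y :: "nat \<Rightarrow> 'v::real_vector"
  assumes B: "finite B" "independent B" and y: "inj y" "range y \<subseteq> span B"
  obtains g :: "nat \<Rightarrow> nat" where "convex_independent (y \<circ> g) \<or> monotone_on_line (y \<circ> g)"
proof -
  obtain \<Phi> :: "('v \<Rightarrow> real) set" where \<Phi>: "finite \<Phi>" "\<And>\<phi>. \<phi> \<in> \<Phi> \<Longrightarrow> linear \<phi>"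
    "\<And>v. v \<in> span B \<Longrightarrow> (\<And>\<phi>. \<phi> \<in> \<Phi> \<Longrightarrow> \<phi> v = 0) \<Longrightarrow> v = 0"
    using finite_functionals_detecting_span[OF B] by blast
  obtain e :: "nat \<Rightarrow> nat" where e: "strict_mono e"
    and sign: "\<And>q i j k i' j' k'. q \<in> \<Phi> \<times> \<Phi> \<Longrightarrow> i < j \<Longrightarrow> j < k \<Longrightarrow> i' < j' \<Longrightarrow> j' < k' \<Longrightarrow>
      orientation (fst q) (snd q) (y (e i)) (y (e j)) (y (e k)) \<noteq> 0 \<Longrightarrow>
      0 < sgn (orientation (fst q) (snd q) (y (e i)) (y (e j)) (y (e k)))
        * orientation (fst q) (snd q) (y (e i')) (y (e j')) (y (e k'))"
    using Ramsey_sign_homogeneous_subseq[OF finite_cartesian_product[OF \<Phi>(1) \<Phi>(1)],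
        of "\<lambda>q i j k. orientation (fst q) (snd q) (y i) (y j) (y k)"] by blast
  define x where "x = y \<circ> e"
  have inj_x: "inj x"
    unfolding x_def using y(1) strict_mono_imp_inj_on[OF e] by (rule inj_compose)
  have x_span: "x n \<in> span B" for n
    using y(2) unfolding x_def by auto
  show ?thesis
  proof (cases "\<exists>\<phi>\<in>\<Phi>. \<exists>\<psi>\<in>\<Phi>. \<exists>i j k. i < j \<and> j < k \<and> orientation \<phi> \<psi> (x i) (x j) (x k) \<noteq> 0")
    case True
    then obtain \<phi> \<psi> i0 j0 k0 where \<phi>\<psi>: "\<phi> \<in> \<Phi>" "\<psi> \<in> \<Phi>" "i0 < j0" "j0 < k0"
      and nonzero: "orientation \<phi> \<psi> (x i0) (x j0) (x k0) \<noteq> 0"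
      by blast
    have "0 < sgn (orientation \<phi> \<psi> (x i0) (x j0) (x k0)) * orientation \<phi> \<psi> (x i) (x j) (x k)"
      if "i < j" "j < k" for i j k
      using sign[of "(\<phi>, \<psi>)", OF _ \<phi>\<psi>(3,4) that] \<phi>\<psi>(1,2) nonzero by (simp add: x_def)
    then have "convex_independent (\<lambda>n. x (Suc n))"
      by (rule convex_independent_shift_if_orientation_positive[OF \<Phi>(2) \<Phi>(2), OF \<phi>\<psi>(1,2)])
    then show ?thesis
      by (intro that[of "e \<circ> Suc"]) (simp add: x_def o_def)
  next
    case False
    obtain g :: "nat \<Rightarrow> nat" where "monotone_on_line (x \<circ> g)"
      by (rule monotone_on_line_subseq_if_orientations_vanish[OF \<Phi>(2,3) subspace_span _ inj_x])
        (use False x_span in auto)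
    then show ?thesis
      by (intro that[of "e \<circ> g"]) (simp add: x_def comp_assoc)
  qed
qed

lemma infinite_set_contains_convex_independent_or_monotone_on_line:
  fixes X :: "'v::real_vector set"
  assumes "infinite X"
  obtains x where "range x \<subseteq> X" "convex_independent x \<or> monotone_on_line x"
proof -
  obtain B where B: "B \<subseteq> X" "independent B" "X \<subseteq> span B"
    using maximal_independent_subset by blast
  show ?thesis
  proof (cases "finite B")
    case False
    then obtain x :: "nat \<Rightarrow> 'v" where x: "inj x" "range x \<subseteq> B"
      using infinite_countable_subset by blast
    then have "convex_independent x"
      using convex_independent_if_independent independent_mono[OF B(2)] by blast
    with x B(1) show ?thesis
      by (intro that) auto
  next
    case True
    obtain y :: "nat \<Rightarrow> 'v" where y: "inj y" "range y \<subseteq> X"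
      using infinite_countable_subset[OF assms] by blast
    then obtain g where "convex_independent (y \<circ> g) \<or> monotone_on_line (y \<circ> g)"
      using convex_independent_or_monotone_on_line_subseq[OF True B(2)] B(3) by blast
    with y(2) show ?thesis
      by (intro that[of "y \<circ> g"]) auto
  qed
qed

theorem corollary5p4:
  fixes X :: "'v::real_vector set"
  assumes "infinite X"
  shows "(\<exists>h. join_embedding fin_intervals_nat interval_join (Co_compact X) (Co_join X) h)
       \<or> (\<exists>h. join_embedding fin_subsets_nat (\<union>) (Co_compact X) (Co_join X) h)"
proof -
  obtain x where "range x \<subseteq> X" "convex_independent x \<or> monotone_on_line x"
    using infinite_set_contains_convex_independent_or_monotone_on_line[OF assms] .
  then show ?thesis
    using join_embedding_fin_intervals_nat join_embedding_fin_subsets_nat by blast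
qed

end
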